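(* Let $T$ be a bounded linear operator on a complex Hilbert space. If $\mathcal{N}(T^* )\subseteq\mathcal{N}(T)$ and $T^n$ is hyponormal for some positive integer $n$, then $\mathcal{N}(T^m)=\mathcal{N}(T^{*m})$ for every positive integer $m$.
   Context: $\mathcal{N}(A)$ denotes the kernel of $A$. An operator $A$ is hyponormal if $AA^*\le A^*A$. *)

theory Defs
  imports "HOL-Analysis.Analysis" "HOL-Library.Complex_Order"
begin

text \<open>The distribution has no complex inner-product spaces, so we introduce them
as type classes: a complex vector space structure on top of a real vector space,
a complex inner product (linear in the second argument, conjugate-linear in the
first) inducing the norm, and completeness.\<close>

class complex_vector = real_vector +
  fixes scaleC :: "complex \<Rightarrow> 'a \<Rightarrow> 'a"
  assumes scaleC_add_right: "scaleC a (x + y) = scaleC a x + scaleC a y"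
    and scaleC_add_left: "scaleC (a + b) x = scaleC a x + scaleC b x"
    and scaleC_scaleC: "scaleC a (scaleC b x) = scaleC (a * b) x"
    and scaleC_one: "scaleC 1 x = x"
    and scaleR_scaleC: "scaleR r x = scaleC (complex_of_real r) x"

class complex_inner = complex_vector + real_normed_vector +
  fixes cinner :: "'a \<Rightarrow> 'a \<Rightarrow> complex"
  assumes cinner_conj: "cinner x y = cnj (cinner y x)"
    and cinner_add_right: "cinner x (y + z) = cinner x y + cinner x z"
    and cinner_scaleC_right: "cinner x (scaleC r y) = r * cinner x y"
    and cinner_ge_zero: "0 \<le> cinner x x"
    and cinner_eq_zero_iff: "cinner x x = 0 \<longleftrightarrow> x = 0"
    and norm_eq_sqrt_cinner: "norm x = sqrt (Re (cinner x x))"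

class chilbert_space = complex_inner + complete_space

definition bounded_clinear :: "('a::complex_inner \<Rightarrow> 'b::complex_inner) \<Rightarrow> bool" where
  "bounded_clinear T \<longleftrightarrow>
     (\<forall>x y. T (x + y) = T x + T y) \<and> (\<forall>c x. T (scaleC c x) = scaleC c (T x)) \<and>
     (\<exists>K. \<forall>x. norm (T x) \<le> norm x * K)"

definition adjoint_of :: "('a::complex_inner \<Rightarrow> 'a) \<Rightarrow> ('a \<Rightarrow> 'a) \<Rightarrow> bool" where
  "adjoint_of T S \<longleftrightarrow> (\<forall>x y. cinner (T x) y = cinner x (S y))"

text \<open>Operator order: A \<le> B iff B - A is positive, i.e. <x,Ax> \<le> <x,Bx> for all x
(in the partial order of complex numbers: real parts ordered, imaginary parts equal).\<close>
definition op_le :: "('a::complex_inner \<Rightarrow> 'a) \<Rightarrow> ('a \<Rightarrow> 'a) \<Rightarrow> bool" where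
  "op_le A B \<longleftrightarrow> (\<forall>x. cinner x (A x) \<le> cinner x (B x))"

definition hyponormal :: "('a::complex_inner \<Rightarrow> 'a) \<Rightarrow> bool" where
  "hyponormal A \<longleftrightarrow> (\<forall>B. adjoint_of A B \<longrightarrow> op_le (A \<circ> B) (B \<circ> A))"

definition kernel :: "('a \<Rightarrow> 'b::zero) \<Rightarrow> 'a set" where
  "kernel A = {x. A x = 0}"

end

theory Submission
  imports Defs
begin

text \<open>If \<open>\<N>(T\<^sup>*) \<subseteq> \<N>(T)\<close> then \<open>T\<^sup>* T\<^sup>* x = 0\<close> forces \<open>\<parallel>T\<^sup>* x\<parallel>\<^sup>2 = \<langle>T T\<^sup>* x, x\<rangle> = 0\<close>,
so all powers of \<open>T\<^sup>*\<close> have the kernel of \<open>T\<^sup>*\<close>. Hyponormality of \<open>T\<^sup>n\<close> gives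
\<open>\<parallel>T\<^sup>*\<^sup>n x\<parallel> \<le> \<parallel>T\<^sup>n x\<parallel>\<close>, hence
\<open>\<N>(T) \<subseteq> \<N>(T\<^sup>n) \<subseteq> \<N>(T\<^sup>*\<^sup>n) = \<N>(T\<^sup>*) \<subseteq> \<N>(T)\<close>. So \<open>\<N>(T) = \<N>(T\<^sup>*)\<close>, and the
first argument with the roles of \<open>T\<close> and \<open>T\<^sup>*\<close> exchanged handles the powers of \<open>T\<close>.\<close>

lemma cinner_zero_right [simp]: "cinner (x::'a::complex_inner) 0 = 0"
proof -
  have "cinner x (0 + 0) = cinner x 0 + cinner x 0"
    by (rule cinner_add_right)
  then show ?thesis by simp
qed

lemma cinner_zero_left [simp]: "cinner 0 (x::'a::complex_inner) = 0"
  by (metis cinner_conj cinner_zero_right complex_cnj_zero)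

lemma cinner_self_eq_zero: "cinner x x = 0 \<Longrightarrow> (x::'a::complex_inner) = 0"
  using cinner_eq_zero_iff by blast

lemma kernel_funpow_eq_kernel:
  fixes f :: "'a::zero \<Rightarrow> 'a"
  assumes "f 0 = 0" and "\<And>x. f (f x) = 0 \<Longrightarrow> f x = 0" and "k > 0"
  shows "kernel (f ^^ k) = kernel f"
proof -
  have "kernel (f ^^ Suc j) = kernel f" for j
  proof (induction j)
    case 0
    then show ?case by simp
  next
    case (Suc j)
    have "x \<in> kernel (f ^^ Suc (Suc j)) \<longleftrightarrow> x \<in> kernel f" for x
    proof -
      have "x \<in> kernel (f ^^ Suc (Suc j)) \<longleftrightarrow> f x \<in> kernel (f ^^ Suc j)"
        unfolding kernel_def mem_Collect_eq by (simp only: funpow_Suc_right comp_apply)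
      also have "\<dots> \<longleftrightarrow> f (f x) = 0"
        by (subst Suc.IH) (simp add: kernel_def)
      also have "\<dots> \<longleftrightarrow> f x = 0"
        using assms(1,2) by metis
      finally show ?thesis
        by (simp only: kernel_def mem_Collect_eq)
    qed
    then show ?case
      by blast
  qed
  then show ?thesis
    using \<open>k > 0\<close> gr0_implies_Suc by blast
qed

lemma kernel_subset_kernel_funpow:
  fixes f :: "'a::zero \<Rightarrow> 'a"
  assumes "f 0 = 0" and "k > 0"
  shows "kernel f \<subseteq> kernel (f ^^ k)"
proof
  fix x
  assume "x \<in> kernel f"
  obtain j where "k = Suc j"
    using \<open>k > 0\<close> gr0_implies_Suc by blast
  moreover have "(f ^^ j) 0 = 0"
    using assms(1) by (induction j) simp_all
  ultimately show "x \<in> kernel (f ^^ k)"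
    using \<open>x \<in> kernel f\<close> by (simp add: kernel_def funpow_swap1)
qed

lemma adjoint_of_sym: "adjoint_of A B \<Longrightarrow> adjoint_of B A"
  unfolding adjoint_of_def by (metis cinner_conj)

lemma adjoint_of_zero:
  assumes "adjoint_of A B"
  shows "A 0 = 0"
proof -
  have "cinner (A 0) (A 0) = cinner 0 (B (A 0))"
    using assms unfolding adjoint_of_def by blast
  then show ?thesis
    by (simp add: cinner_self_eq_zero)
qed

lemma adjoint_of_funpow:
  assumes "adjoint_of A B"
  shows "adjoint_of (A ^^ k) (B ^^ k)"
proof (induction k)
  case 0
  then show ?case by (simp add: adjoint_of_def)
next
  case (Suc k)
  have "cinner ((A ^^ Suc k) x) y = cinner x ((B ^^ Suc k) y)" for x y
  proof -
    have "cinner ((A ^^ Suc k) x) y = cinner ((A ^^ k) x) (B y)"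
      using assms by (simp add: adjoint_of_def)
    also have "\<dots> = cinner x ((B ^^ k) (B y))"
      using Suc.IH by (simp add: adjoint_of_def)
    finally show ?thesis
      by (simp add: funpow_swap1)
  qed
  then show ?case
    by (simp add: adjoint_of_def)
qed

lemma adjoint_kernel_funpow:
  assumes adj: "adjoint_of A B" and ker: "kernel B \<subseteq> kernel A" and "k > 0"
  shows "kernel (B ^^ k) = kernel B"
proof (rule kernel_funpow_eq_kernel)
  show "B 0 = 0"
    using adjoint_of_zero adjoint_of_sym adj by blast
  show "B x = 0" if "B (B x) = 0" for x
  proof -
    have "A (B x) = 0"
      using that ker unfolding kernel_def by blast
    moreover have "cinner (A (B x)) x = cinner (B x) (B x)"
      using adj unfolding adjoint_of_def by blast
    ultimately show ?thesis
      by (simp add: cinner_self_eq_zero)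
  qed
qed fact

lemma hyponormal_kernel_subset:
  assumes adj: "adjoint_of A B" and "hyponormal A"
  shows "kernel A \<subseteq> kernel B"
proof
  fix x
  assume "x \<in> kernel A"
  have "cinner (B x) (B x) = cinner x (A (B x))"
    using adj unfolding adjoint_of_def by (metis cinner_conj)
  also have "\<dots> \<le> cinner x (B (A x))"
    using assms unfolding hyponormal_def op_le_def by auto
  also have "\<dots> = 0"
    using \<open>x \<in> kernel A\<close> adjoint_of_zero[OF adjoint_of_sym[OF adj]] by (simp add: kernel_def)
  finally have "cinner (B x) (B x) = 0"
    using cinner_ge_zero order_antisym by blast
  then show "x \<in> kernel B"
    by (simp add: kernel_def cinner_self_eq_zero)
qed

theorem corollary5p7:
  fixes T Tadj :: "'a::chilbert_space \<Rightarrow> 'a"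
  assumes "bounded_clinear T"
    and "adjoint_of T Tadj"
    and "kernel Tadj \<subseteq> kernel T"
    and "n > 0"
    and "hyponormal (T ^^ n)"
  shows "\<forall>m>0. kernel (T ^^ m) = kernel (Tadj ^^ m)"
proof -
  have adj_pow_kernel: "kernel (Tadj ^^ k) = kernel Tadj" if "k > 0" for k
    using adjoint_kernel_funpow assms(2,3) that by blast
  have "kernel T \<subseteq> kernel (T ^^ n)"
    using kernel_subset_kernel_funpow adjoint_of_zero assms(2,4) by blast
  also have "\<dots> \<subseteq> kernel (Tadj ^^ n)"
    using hyponormal_kernel_subset adjoint_of_funpow assms(2,5) by blast
  finally have "kernel T = kernel Tadj"
    using adj_pow_kernel \<open>n > 0\<close> assms(3) by blast
  then show ?thesis
    using adjoint_kernel_funpow[OF adjoint_of_sym[OF assms(2)]] adj_pow_kernel by simp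
qed

end
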